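(* Let $\omega$ be a weight on a countable group $G$, and let $\mu$ be a probability measure on $G$ with finite first $\log\omega$-moment. Then: (i) $\mathrm{Ly}_\omega(G,\mu)\ge 0$; (ii) if $\tilde\omega$ is a weight on $G$ equivalent to $\omega$, then $\mathrm{Ly}_{\tilde\omega}(G,\mu)=\mathrm{Ly}_\omega(G,\mu)$; (iii) if $G$ is finitely generated with finite symmetric generating set $S$ containing $e$ and $\mu$ has finite first moment with respect to the word length $|\cdot|_S$, then the Lyapunov exponent of $\mu$ with respect to $\omega$ exists and \[ \mathrm{Ly}_\omega(G,\mu)\le(\log\omega_S)\,l(G,\mu). \]
   Context: A weight on $G$ is $\omega:G\to[a,\infty)$, $a>0$, with $\omega(st)\le C\omega(s)\omega(t)$ for some $C>0$ and all $s,t$. Two weights $\omega,\tilde\omega$ are equivalent if $c\,\omega\le\tilde\omega\le c'\omega$ for some $c,c'>0$. Finite first $\log\omega$-moment means $\sum_s\mu(s)\log\omega(s)<\infty$. The Lyapunov exponent is $\mathrm{Ly}_\omega(G,\mu)=\lim_{n\to\infty}\frac1n\sum_s\mu^{*n}(s)\log\omega(s)$, where $\mu^{*n}$ is the $n$-fold convolution power ($\mu*\nu(s)=\sum_t\mu(t)\nu(t^{-1}s)$). For finite symmetric generating $S\ni e$, the growth rate is $\omega_S=\lim_{n\to\infty}\sup_{s\in S^n}\omega(s)^{1/n}$; finite first moment means $\sum_s\mu(s)|s|_S<\infty$; the speed is $l(G,\mu)=\lim_{n\to\infty}\frac1n\sum_s\mu^{*n}(s)|s|_S$. *)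

theory Defs
  imports "HOL-Analysis.Analysis" "HOL-Algebra.Algebra"
begin

definition weight :: "('a, 'b) monoid_scheme \<Rightarrow> ('a \<Rightarrow> real) \<Rightarrow> bool" where
  "weight G w \<longleftrightarrow>
     (\<exists>a>0. \<forall>s\<in>carrier G. a \<le> w s) \<and>
     (\<exists>C>0. \<forall>s\<in>carrier G. \<forall>t\<in>carrier G. w (s \<otimes>\<^bsub>G\<^esub> t) \<le> C * w s * w t)"

definition weight_equiv :: "('a, 'b) monoid_scheme \<Rightarrow> ('a \<Rightarrow> real) \<Rightarrow> ('a \<Rightarrow> real) \<Rightarrow> bool" where
  "weight_equiv G w w' \<longleftrightarrow>
     (\<exists>c>0. \<exists>c'>0. \<forall>s\<in>carrier G. c * w s \<le> w' s \<and> w' s \<le> c' * w s)"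

definition prob_on :: "('a, 'b) monoid_scheme \<Rightarrow> ('a \<Rightarrow> real) \<Rightarrow> bool" where
  "prob_on G \<mu> \<longleftrightarrow> (\<forall>s\<in>carrier G. 0 \<le> \<mu> s) \<and> (\<mu> has_sum 1) (carrier G)"

definition conv :: "('a, 'b) monoid_scheme \<Rightarrow> ('a \<Rightarrow> real) \<Rightarrow> ('a \<Rightarrow> real) \<Rightarrow> 'a \<Rightarrow> real" where
  "conv G \<mu> \<nu> s = (\<Sum>\<^sub>\<infinity>t\<in>carrier G. \<mu> t * \<nu> (inv\<^bsub>G\<^esub> t \<otimes>\<^bsub>G\<^esub> s))"

primrec conv_pow :: "('a, 'b) monoid_scheme \<Rightarrow> ('a \<Rightarrow> real) \<Rightarrow> nat \<Rightarrow> 'a \<Rightarrow> real" where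
  "conv_pow G \<mu> 0 = (\<lambda>s. if s = \<one>\<^bsub>G\<^esub> then 1 else 0)"
| "conv_pow G \<mu> (Suc n) = conv G (conv_pow G \<mu> n) \<mu>"

definition finite_log_moment :: "('a, 'b) monoid_scheme \<Rightarrow> ('a \<Rightarrow> real) \<Rightarrow> ('a \<Rightarrow> real) \<Rightarrow> bool" where
  "finite_log_moment G w \<mu> \<longleftrightarrow> (\<lambda>s. \<mu> s * ln (w s)) summable_on carrier G"

definition lyap_seq :: "('a, 'b) monoid_scheme \<Rightarrow> ('a \<Rightarrow> real) \<Rightarrow> ('a \<Rightarrow> real) \<Rightarrow> nat \<Rightarrow> real" where
  "lyap_seq G w \<mu> n = (\<Sum>\<^sub>\<infinity>s\<in>carrier G. conv_pow G \<mu> n s * ln (w s)) / real n"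

definition lyapunov :: "('a, 'b) monoid_scheme \<Rightarrow> ('a \<Rightarrow> real) \<Rightarrow> ('a \<Rightarrow> real) \<Rightarrow> real" where
  "lyapunov G w \<mu> = lim (lyap_seq G w \<mu>)"

primrec words :: "('a, 'b) monoid_scheme \<Rightarrow> 'a set \<Rightarrow> nat \<Rightarrow> 'a set" where
  "words G S 0 = {\<one>\<^bsub>G\<^esub>}"
| "words G S (Suc n) = {x \<otimes>\<^bsub>G\<^esub> y | x y. x \<in> words G S n \<and> y \<in> S}"

definition word_length :: "('a, 'b) monoid_scheme \<Rightarrow> 'a set \<Rightarrow> 'a \<Rightarrow> nat" where
  "word_length G S s = (LEAST n. s \<in> words G S n)"

definition growth_rate :: "('a, 'b) monoid_scheme \<Rightarrow> ('a \<Rightarrow> real) \<Rightarrow> 'a set \<Rightarrow> real" where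
  "growth_rate G w S = lim (\<lambda>n. (SUP s\<in>words G S n. w s) powr (1 / real n))"

definition finite_first_moment :: "('a, 'b) monoid_scheme \<Rightarrow> 'a set \<Rightarrow> ('a \<Rightarrow> real) \<Rightarrow> bool" where
  "finite_first_moment G S \<mu> \<longleftrightarrow> (\<lambda>s. \<mu> s * real (word_length G S s)) summable_on carrier G"

definition speed_seq :: "('a, 'b) monoid_scheme \<Rightarrow> 'a set \<Rightarrow> ('a \<Rightarrow> real) \<Rightarrow> nat \<Rightarrow> real" where
  "speed_seq G S \<mu> n = (\<Sum>\<^sub>\<infinity>s\<in>carrier G. conv_pow G \<mu> n s * real (word_length G S s)) / real n"

definition speed :: "('a, 'b) monoid_scheme \<Rightarrow> 'a set \<Rightarrow> ('a \<Rightarrow> real) \<Rightarrow> real" where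
  "speed G S \<mu> = lim (speed_seq G S \<mu>)"

end

theory Submission imports Defs begin

text \<open>
  If \<open>w\<close> is a weight with \<open>a \<le> w\<close> and \<open>w (s t) \<le> C w(s) w(t)\<close>, then \<open>h = ln w - ln a\<close> is
  nonnegative and subadditive up to the constant \<open>K = ln C + ln a\<close>. By Tonelli and associativity
  of convolution, the \<open>h\<close>-moments \<open>E n\<close> of the convolution powers \<open>\<mu>\<^sup>*\<^sup>n\<close> then satisfy
  \<open>E (n + m) \<le> K + E n + E m\<close>, so \<open>E n / n\<close> converges to a nonnegative limit by Fekete's lemma:
  this is (i). Equivalent weights have logarithms at bounded distance, which changes \<open>E n\<close> by a
  bounded amount, whence (ii). For (iii) the word length is subadditive, so the speed exists by
  the same argument; Fekete's lemma for the submultiplicative sequence \<open>n \<mapsto> sup w(S\<^sup>n)\<close> gives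
  \<open>ln w(s) \<le> (ln \<omega>\<^sub>S + \<epsilon>) |s| + B\<^sub>\<epsilon>\<close>, and integrating against \<open>\<mu>\<^sup>*\<^sup>n\<close>, dividing by \<open>n\<close> and
  letting first \<open>n \<rightarrow> \<infinity>\<close> and then \<open>\<epsilon> \<rightarrow> 0\<close> yields the bound.
\<close>

section \<open>Subadditive sequences\<close>

lemma subadditive_iterate_le:
  fixes u :: "nat \<Rightarrow> real"
  assumes sub: "\<And>m n. m > 0 \<Longrightarrow> n > 0 \<Longrightarrow> u (m + n) \<le> u m + u n"
    and "m > 0" "r > 0"
  shows "u (q * m + r) \<le> real q * u m + u r"
proof (induction q)
  case (Suc q)
  have "u (Suc q * m + r) = u (m + (q * m + r))" by (simp add: algebra_simps)
  also have "\<dots> \<le> u m + u (q * m + r)" using sub assms(2,3) by simp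
  finally show ?case using Suc by (simp add: algebra_simps)
qed simp

lemma subadditive_ratio_le:
  fixes u :: "nat \<Rightarrow> real"
  assumes sub: "\<And>m n. m > 0 \<Longrightarrow> n > 0 \<Longrightarrow> u (m + n) \<le> u m + u n"
    and m: "m > 0" and n: "n > 0"
  shows "u n / real n \<le> u m / real m + (\<bar>u m\<bar> + \<bar>Max (u ` {1..m})\<bar>) / real n"
proof -
  define q where "q = (n - 1) div m"
  define k where "k = (n - 1) mod m + 1"
  have n_eq: "n = q * m + k" and k: "k \<in> {1..m}"
    using m n unfolding q_def k_def by (auto simp: Suc_le_eq)
  have "u n \<le> real q * u m + u k"
    using subadditive_iterate_le[OF sub m, of k q] k n_eq by simp
  also have "real q * u m = real n * (u m / real m) - real k * (u m / real m)"
    using m by (simp add: n_eq field_simps)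
  also have "- (real k * (u m / real m)) \<le> \<bar>u m\<bar>"
  proof -
    have "\<bar>real k * (u m / real m)\<bar> = (real k / real m) * \<bar>u m\<bar>" by (simp add: abs_mult)
    also have "\<dots> \<le> \<bar>u m\<bar>" using k by (intro mult_left_le_one_le) auto
    finally show ?thesis by linarith
  qed
  moreover have "u k \<le> \<bar>Max (u ` {1..m})\<bar>"
    using k by (intro order.trans[OF Max_ge abs_ge_self]) auto
  ultimately have "u n \<le> real n * (u m / real m) + (\<bar>u m\<bar> + \<bar>Max (u ` {1..m})\<bar>)" by linarith
  thus ?thesis using n by (simp add: field_simps)
qed

lemma subadditive_ratio_tendsto_Inf:
  fixes u :: "nat \<Rightarrow> real"
  assumes sub: "\<And>m n. m > 0 \<Longrightarrow> n > 0 \<Longrightarrow> u (m + n) \<le> u m + u n"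
    and lower: "\<And>n. n > 0 \<Longrightarrow> c \<le> u n"
  shows "(\<lambda>n. u n / real n) \<longlonglongrightarrow> Inf ((\<lambda>n. u n / real n) ` {0<..})"
proof (rule order_tendstoI)
  let ?L = "Inf ((\<lambda>n. u n / real n) ` {0<..})"
  have "min c 0 \<le> u n / real n" if "n > 0" for n
  proof -
    have "min c 0 * real n \<le> min c 0 * 1" using that by (intro mult_left_mono_neg) auto
    thus ?thesis using lower[OF that] that by (simp add: le_divide_eq)
  qed
  hence bdd: "bdd_below ((\<lambda>n. u n / real n) ` {0<..})" by (intro bdd_belowI2) auto
  have low: "?L \<le> u n / real n" if "n > 0" for n using bdd that by (intro cInf_lower) auto
  fix a assume "a < ?L"
  with low show "\<forall>\<^sub>F n in sequentially. a < u n / real n"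
    by (intro eventually_mono[OF eventually_gt_at_top[of 0]]) (use less_le_trans in blast)
next
  fix b assume "Inf ((\<lambda>n. u n / real n) ` {0<..}) < b"
  then obtain m where m: "m > 0" "u m / real m < b"
    using cInf_lessD[of "(\<lambda>n. u n / real n) ` {0<..}" b] by fastforce
  define D where "D = \<bar>u m\<bar> + \<bar>Max (u ` {1..m})\<bar>"
  have "\<forall>\<^sub>F n in sequentially. D / real n < b - u m / real m"
    using m(2) by (intro order_tendstoD(2)[OF lim_const_over_n]) simp
  with eventually_gt_at_top[of 0]
  show "\<forall>\<^sub>F n in sequentially. u n / real n < b"
  proof eventually_elim
    case (elim n)
    thus ?case using subadditive_ratio_le[OF sub m(1), of n] unfolding D_def by linarith
  qed
qed

lemma ratio_tendsto_imp_linear_bound: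
  fixes f :: "nat \<Rightarrow> real"
  assumes lim: "(\<lambda>n. f n / real n) \<longlonglongrightarrow> L" and "0 < \<epsilon>"
  shows "\<exists>B. \<forall>n. f n \<le> (L + \<epsilon>) * real n + B"
proof -
  obtain N where N: "\<And>n. n \<ge> N \<Longrightarrow> f n / real n < L + \<epsilon>"
    using order_tendstoD(2)[OF lim, of "L + \<epsilon>"] \<open>0 < \<epsilon>\<close> by (auto simp: eventually_sequentially)
  define B where "B = max 0 (Max ((\<lambda>k. f k - (L + \<epsilon>) * real k) ` {..N}))"
  have "f n \<le> (L + \<epsilon>) * real n + B" for n
  proof (cases "n \<le> N")
    case True
    hence "f n - (L + \<epsilon>) * real n \<le> B" unfolding B_def by (intro max.coboundedI2 Max_ge) auto
    thus ?thesis by simp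
  next
    case False
    hence "f n < (L + \<epsilon>) * real n" using N[of n] by (simp add: divide_less_eq)
    thus ?thesis unfolding B_def by linarith
  qed
  thus ?thesis by blast
qed

lemma submultiplicative_ln_ratio_tendsto:
  fixes M :: "nat \<Rightarrow> real"
  assumes a: "0 < a" "\<And>n. a \<le> M n" and C: "0 < C" "\<And>m n. M (m + n) \<le> C * M m * M n"
  shows "\<exists>L. (\<lambda>n. ln (M n) / real n) \<longlonglongrightarrow> L \<and> (\<lambda>n. M n powr (1 / real n)) \<longlonglongrightarrow> exp L"
proof -
  have M_pos: "0 < M n" for n using a(1) a(2)[of n] by linarith
  define b where "b n = ln C + ln (M n)" for n
  have "b (m + n) \<le> b m + b n" for m n
  proof -
    have "ln (M (m + n)) \<le> ln (C * M m * M n)"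
      using C(2) M_pos by (intro ln_mono) auto
    also have "\<dots> = ln C + ln (M m) + ln (M n)"
      using M_pos[of m] M_pos[of n] C(1) by (simp add: ln_mult)
    finally show ?thesis unfolding b_def by simp
  qed
  moreover have "ln C + ln a \<le> b n" for n unfolding b_def using a(1) a(2)[of n] by simp
  ultimately have "(\<lambda>n. b n / real n) \<longlonglongrightarrow> Inf ((\<lambda>n. b n / real n) ` {0<..})" (is "_ \<longlonglongrightarrow> ?L")
    by (rule subadditive_ratio_tendsto_Inf)
  hence "(\<lambda>n. b n / real n - ln C / real n) \<longlonglongrightarrow> ?L - 0"
    by (intro tendsto_diff lim_const_over_n)
  hence lim: "(\<lambda>n. ln (M n) / real n) \<longlonglongrightarrow> ?L"
    unfolding b_def by (simp add: add_divide_distrib)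
  moreover have "M n powr (1 / real n) = exp (ln (M n) / real n)" for n
    using M_pos[of n] unfolding powr_def by simp
  ultimately show ?thesis using tendsto_exp[OF lim] by auto
qed

section \<open>Moments of probability measures on a group\<close>

definition moment :: "('a, 'b) monoid_scheme \<Rightarrow> ('a \<Rightarrow> real) \<Rightarrow> ('a \<Rightarrow> real) \<Rightarrow> real" where
  "moment G \<nu> f = (\<Sum>\<^sub>\<infinity>s\<in>carrier G. \<nu> s * f s)"

definition has_moment :: "('a, 'b) monoid_scheme \<Rightarrow> ('a \<Rightarrow> real) \<Rightarrow> ('a \<Rightarrow> real) \<Rightarrow> bool" where
  "has_moment G \<nu> f \<longleftrightarrow> (\<lambda>s. \<nu> s * f s) summable_on carrier G"

lemma has_moment_has_sum: "has_moment G \<nu> f \<Longrightarrow> ((\<lambda>s. \<nu> s * f s) has_sum moment G \<nu> f) (carrier G)"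
  unfolding has_moment_def moment_def by (rule has_sum_infsum)

lemma prob_on_nonneg: "prob_on G \<nu> \<Longrightarrow> s \<in> carrier G \<Longrightarrow> 0 \<le> \<nu> s"
  unfolding prob_on_def by auto

lemma prob_on_infsum: "prob_on G \<nu> \<Longrightarrow> infsum \<nu> (carrier G) = 1"
  unfolding prob_on_def by (blast intro: infsumI)

lemma prob_on_summable: "prob_on G \<nu> \<Longrightarrow> \<nu> summable_on carrier G"
  unfolding prob_on_def by (blast intro: has_sum_imp_summable)

lemma prob_on_abs_le_1:
  assumes "prob_on G \<nu>" "s \<in> carrier G"
  shows "\<bar>\<nu> s\<bar> \<le> 1"
proof -
  have "(\<nu> has_sum \<nu> s) {s}" by (rule has_sum_finiteI) auto
  hence "\<nu> s \<le> 1"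
    using assms unfolding prob_on_def by (elim conjE has_sum_mono_neutral) auto
  thus ?thesis using prob_on_nonneg[OF assms] by simp
qed

lemma has_moment_const: "prob_on G \<nu> \<Longrightarrow> has_moment G \<nu> (\<lambda>_. c)"
  unfolding has_moment_def by (intro summable_on_cmult_left prob_on_summable)

lemma moment_const: "prob_on G \<nu> \<Longrightarrow> moment G \<nu> (\<lambda>_. c) = c"
  unfolding moment_def by (simp add: infsum_cmult_left' prob_on_infsum)

lemma moment_cmult: "moment G \<nu> (\<lambda>s. c * f s) = c * moment G \<nu> f"
  unfolding moment_def by (simp add: mult.left_commute infsum_cmult_right')

lemma has_moment_cmult: "has_moment G \<nu> f \<Longrightarrow> has_moment G \<nu> (\<lambda>s. c * f s)"
  unfolding has_moment_def
  by (drule summable_on_cmult_right[where c = c]) (simp add: mult.left_commute)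

lemma has_moment_add:
  "has_moment G \<nu> f \<Longrightarrow> has_moment G \<nu> g \<Longrightarrow> has_moment G \<nu> (\<lambda>s. f s + g s)"
  unfolding has_moment_def by (drule (1) summable_on_add) (simp add: algebra_simps)

lemma moment_add:
  "has_moment G \<nu> f \<Longrightarrow> has_moment G \<nu> g \<Longrightarrow> moment G \<nu> (\<lambda>s. f s + g s) = moment G \<nu> f + moment G \<nu> g"
  unfolding has_moment_def moment_def by (simp add: distrib_left infsum_add)

lemma has_moment_diff_const_iff:
  assumes "prob_on G \<nu>"
  shows "has_moment G \<nu> (\<lambda>s. f s - c) \<longleftrightarrow> has_moment G \<nu> f"
proof
  assume "has_moment G \<nu> (\<lambda>s. f s - c)"
  from has_moment_add[OF this has_moment_const[OF assms, of c]] show "has_moment G \<nu> f" by simp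
next
  assume "has_moment G \<nu> f"
  from has_moment_add[OF this has_moment_const[OF assms, of "- c"]]
  show "has_moment G \<nu> (\<lambda>s. f s - c)" by simp
qed

lemma moment_diff_const:
  assumes "prob_on G \<nu>" "has_moment G \<nu> f"
  shows "moment G \<nu> (\<lambda>s. f s - c) = moment G \<nu> f - c"
  using moment_add[OF assms(2) has_moment_const[OF assms(1), of "- c"]] moment_const[OF assms(1)]
  by simp

lemma has_moment_abs_le:
  assumes prob: "prob_on G \<nu>" and g: "has_moment G \<nu> g"
    and le: "\<And>s. s \<in> carrier G \<Longrightarrow> \<bar>f s\<bar> \<le> g s"
  shows "has_moment G \<nu> f"
proof -
  have "norm (\<nu> s * f s) \<le> \<nu> s * g s" if "s \<in> carrier G" for s
    using mult_left_mono[OF le[OF that] prob_on_nonneg[OF prob that]] prob_on_nonneg[OF prob that]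
    by (simp add: abs_mult)
  with g have "(\<lambda>s. norm (\<nu> s * f s)) summable_on carrier G"
    unfolding has_moment_def by (rule Infinite_Sum.abs_summable_on_comparison_test')
  thus ?thesis
    unfolding has_moment_def by (rule summable_on_iff_abs_summable_on_real[THEN iffD2])
qed

lemma moment_mono:
  assumes "prob_on G \<nu>" "has_moment G \<nu> f" "has_moment G \<nu> g"
    and "\<And>s. s \<in> carrier G \<Longrightarrow> f s \<le> g s"
  shows "moment G \<nu> f \<le> moment G \<nu> g"
  using assms unfolding has_moment_def moment_def
  by (intro infsum_mono) (simp_all add: mult_left_mono prob_on_nonneg)

lemma moment_nonneg:
  "prob_on G \<nu> \<Longrightarrow> (\<And>s. s \<in> carrier G \<Longrightarrow> 0 \<le> f s) \<Longrightarrow> 0 \<le> moment G \<nu> f"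
  unfolding moment_def by (auto intro!: infsum_nonneg simp: prob_on_nonneg)

lemma bounded_moment:
  assumes "prob_on G \<nu>" "\<And>s. s \<in> carrier G \<Longrightarrow> \<bar>f s\<bar> \<le> D"
  shows "has_moment G \<nu> f" and "\<bar>moment G \<nu> f\<bar> \<le> D"
proof -
  show f: "has_moment G \<nu> f"
    using assms(1) has_moment_const[OF assms(1)] assms(2) by (rule has_moment_abs_le)
  have "- D \<le> f s" "f s \<le> D" if "s \<in> carrier G" for s
    using assms(2)[OF that, unfolded abs_le_iff] by linarith+
  hence "moment G \<nu> f \<le> moment G \<nu> (\<lambda>_. D)" "moment G \<nu> (\<lambda>_. - D) \<le> moment G \<nu> f"
    using assms(1) f by (auto intro!: moment_mono has_moment_const)
  thus "\<bar>moment G \<nu> f\<bar> \<le> D" using assms(1) by (simp add: moment_const)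
qed

lemma moment_le_affine:
  assumes "prob_on G \<nu>" "has_moment G \<nu> f" "has_moment G \<nu> g"
    and "\<And>s. s \<in> carrier G \<Longrightarrow> f s \<le> c * g s + B"
  shows "moment G \<nu> f \<le> c * moment G \<nu> g + B"
proof -
  have "moment G \<nu> f \<le> moment G \<nu> (\<lambda>s. c * g s + B)"
    using assms by (intro moment_mono has_moment_add has_moment_cmult has_moment_const)
  thus ?thesis using assms by (simp add: moment_add has_moment_cmult has_moment_const moment_cmult moment_const)
qed

lemma lyap_seq_eq_moment: "lyap_seq G w \<mu> n = moment G (conv_pow G \<mu> n) (\<lambda>s. ln (w s)) / real n"
  unfolding lyap_seq_def moment_def ..

lemma speed_seq_eq_moment:
  "speed_seq G S \<mu> n = moment G (conv_pow G \<mu> n) (\<lambda>s. real (word_length G S s)) / real n"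
  unfolding speed_seq_def moment_def ..

section \<open>Convolution\<close>

lemma has_sum_swap_nonneg:
  fixes F :: "'x \<Rightarrow> 'y \<Rightarrow> real"
  assumes nonneg: "\<And>x y. x \<in> A \<Longrightarrow> y \<in> B \<Longrightarrow> 0 \<le> F x y"
    and rows: "\<And>x. x \<in> A \<Longrightarrow> (F x has_sum g x) B"
    and total: "(g has_sum S) A"
  shows "((\<lambda>y. \<Sum>\<^sub>\<infinity>x\<in>A. F x y) has_sum S) B"
proof -
  have "(\<lambda>(x, y). F x y) summable_on A \<times> B"
    using summable_on_SigmaI[where f = "\<lambda>(x, y). F x y" and B = "\<lambda>_. B"] nonneg rows
      has_sum_imp_summable[OF total] by auto
  hence "((\<lambda>(x, y). F x y) has_sum S) (A \<times> B)"
    using has_sum_SigmaI[where f = "\<lambda>(x, y). F x y" and B = "\<lambda>_. B"] rows total by auto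
  hence swapped: "((\<lambda>(y, x). F x y) has_sum S) (B \<times> A)"
    by (subst (asm) has_sum_swap) (simp add: case_prod_unfold)
  show ?thesis
  proof (rule has_sum_Sigma'[OF swapped[unfolded case_prod_unfold]])
    fix y assume "y \<in> B"
    hence "(\<lambda>x. F x y) summable_on A"
      using summable_on_SigmaD1[of "\<lambda>y x. F x y" B "\<lambda>_. A"] swapped
      by (auto dest: has_sum_imp_summable)
    thus "((\<lambda>x. F (snd (y, x)) (fst (y, x))) has_sum (\<Sum>\<^sub>\<infinity>x\<in>A. F x y)) A"
      by (simp add: has_sum_infsum)
  qed
qed

context group
begin

lemma has_sum_conv_mult:
  assumes \<nu>: "\<And>t. t \<in> carrier G \<Longrightarrow> 0 \<le> \<nu> t" and \<mu>: "\<And>u. u \<in> carrier G \<Longrightarrow> 0 \<le> \<mu> u"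
    and f: "\<And>s. s \<in> carrier G \<Longrightarrow> 0 \<le> f s"
    and inner: "\<And>t. t \<in> carrier G \<Longrightarrow> ((\<lambda>u. \<mu> u * f (t \<otimes> u)) has_sum g t) (carrier G)"
    and outer: "((\<lambda>t. \<nu> t * g t) has_sum S) (carrier G)"
  shows "((\<lambda>s. conv G \<nu> \<mu> s * f s) has_sum S) (carrier G)"
proof -
  define F where "F t s = \<nu> t * \<mu> (inv t \<otimes> s) * f s" for t s
  have rows: "(F t has_sum \<nu> t * g t) (carrier G)" if t: "t \<in> carrier G" for t
  proof -
    have bij: "bij_betw (\<lambda>u. t \<otimes> u) (carrier G) (carrier G)"
      by (rule bij_betwI[where g = "\<lambda>s. inv t \<otimes> s"]) (use t in \<open>auto simp: m_assoc[symmetric]\<close>)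
    have "((\<lambda>u. \<nu> t * (\<mu> u * f (t \<otimes> u))) has_sum \<nu> t * g t) (carrier G)"
      using inner[OF t] by (rule has_sum_cmult_right)
    also have "?this \<longleftrightarrow> ((\<lambda>u. F t (t \<otimes> u)) has_sum \<nu> t * g t) (carrier G)"
      by (intro has_sum_cong) (use t in \<open>auto simp: F_def m_assoc[symmetric]\<close>)
    also have "\<dots> \<longleftrightarrow> (F t has_sum \<nu> t * g t) (carrier G)"
      by (rule has_sum_reindex_bij_betw[OF bij])
    finally show ?thesis .
  qed
  have "((\<lambda>s. \<Sum>\<^sub>\<infinity>t\<in>carrier G. F t s) has_sum S) (carrier G)"
    by (rule has_sum_swap_nonneg[OF _ rows outer]) (auto simp: F_def \<nu> \<mu> f)
  moreover have "(\<Sum>\<^sub>\<infinity>t\<in>carrier G. F t s) = conv G \<nu> \<mu> s * f s" for s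
    unfolding F_def conv_def by (rule infsum_cmult_left')
  ultimately show ?thesis by simp
qed

lemma conv_eq_moment: "conv G \<nu> \<mu> s = moment G \<nu> (\<lambda>t. \<mu> (inv t \<otimes> s))"
  unfolding conv_def moment_def ..

lemma conv_cong:
  "(\<And>t. t \<in> carrier G \<Longrightarrow> \<nu> t = \<nu>' t) \<Longrightarrow> (\<And>t. t \<in> carrier G \<Longrightarrow> \<mu> t = \<mu>' t) \<Longrightarrow> s \<in> carrier G
    \<Longrightarrow> conv G \<nu> \<mu> s = conv G \<nu>' \<mu>' s"
  unfolding conv_def by (intro infsum_cong) auto

lemma prob_on_conv:
  assumes \<nu>: "prob_on G \<nu>" and \<mu>: "prob_on G \<mu>"
  shows "prob_on G (conv G \<nu> \<mu>)"
proof -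
  have "((\<lambda>s. conv G \<nu> \<mu> s * 1) has_sum 1) (carrier G)"
    using assms by (intro has_sum_conv_mult[where g = "\<lambda>_. 1"]) (auto simp: prob_on_def)
  moreover have "0 \<le> conv G \<nu> \<mu> s" if "s \<in> carrier G" for s
    unfolding conv_eq_moment using that by (intro moment_nonneg[OF \<nu>] prob_on_nonneg[OF \<mu>]) simp
  ultimately show ?thesis unfolding prob_on_def by simp
qed

lemma has_sum_unit: "((\<lambda>s. (if s = \<one> then 1 else 0) * f s) has_sum (f \<one> :: real)) (carrier G)"
proof -
  have "((\<lambda>s. (if s = \<one> then 1 else 0) * f s) has_sum f \<one>) {\<one>}" by (rule has_sum_finiteI) auto
  thus ?thesis by (rule has_sum_cong_neutral[THEN iffD1, rotated -1]) auto
qed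

lemma prob_on_unit: "prob_on G (\<lambda>s. if s = \<one> then 1 else 0)"
  using has_sum_unit[of "\<lambda>_. 1"] unfolding prob_on_def by simp

lemma has_moment_unit: "has_moment G (\<lambda>s. if s = \<one> then 1 else 0) f"
  unfolding has_moment_def using has_sum_unit by (rule has_sum_imp_summable)

lemma conv_unit_right:
  assumes s: "s \<in> carrier G"
  shows "conv G \<nu> (\<lambda>s. if s = \<one> then 1 else 0) s = \<nu> s"
proof -
  have "conv G \<nu> (\<lambda>s. if s = \<one> then 1 else 0) s
      = (\<Sum>\<^sub>\<infinity>t\<in>{s}. \<nu> t * (if inv t \<otimes> s = \<one> then 1 else 0))"
    unfolding conv_def
  proof (rule infsum_cong_neutral)
    fix t assume "t \<in> carrier G - {s}"
    hence "inv t \<otimes> s \<noteq> \<one>" using s inv_solve_left'[of \<one> t s] by auto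
    thus "\<nu> t * (if inv t \<otimes> s = \<one> then 1 else 0) = 0" by simp
  qed (use s in auto)
  also have "\<dots> = \<nu> s" using s by simp
  finally show ?thesis .
qed

lemma prob_on_conv_pow: "prob_on G \<mu> \<Longrightarrow> prob_on G (conv_pow G \<mu> n)"
  by (induction n) (auto intro: prob_on_conv prob_on_unit)

lemma conv_assoc:
  assumes \<nu>: "prob_on G \<nu>" and \<mu>: "prob_on G \<mu>" and \<rho>: "prob_on G \<rho>" and s: "s \<in> carrier G"
  shows "conv G (conv G \<nu> \<mu>) \<rho> s = conv G \<nu> (conv G \<mu> \<rho>) s"
proof -
  have "((\<lambda>u. \<mu> u * \<rho> (inv (t \<otimes> u) \<otimes> s)) has_sum conv G \<mu> \<rho> (inv t \<otimes> s)) (carrier G)"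
    if t: "t \<in> carrier G" for t
  proof -
    have "conv G \<mu> \<rho> (inv t \<otimes> s) = moment G \<mu> (\<lambda>u. \<rho> (inv (t \<otimes> u) \<otimes> s))"
      unfolding conv_eq_moment moment_def using t s
      by (intro infsum_cong) (simp add: inv_mult_group m_assoc)
    moreover have "has_moment G \<mu> (\<lambda>u. \<rho> (inv (t \<otimes> u) \<otimes> s))"
      using t s by (intro bounded_moment(1)[OF \<mu>, where D = 1]) (simp add: prob_on_abs_le_1[OF \<rho>])
    ultimately show ?thesis by (simp add: has_moment_has_sum)
  qed
  moreover have "((\<lambda>t. \<nu> t * conv G \<mu> \<rho> (inv t \<otimes> s)) has_sum conv G \<nu> (conv G \<mu> \<rho>) s) (carrier G)"
    unfolding conv_eq_moment[of \<nu>]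
    by (rule has_moment_has_sum[OF bounded_moment(1)[OF \<nu>, where D = 1]])
      (use s prob_on_abs_le_1[OF prob_on_conv[OF \<mu> \<rho>]] in simp)
  ultimately have "((\<lambda>x. conv G \<nu> \<mu> x * \<rho> (inv x \<otimes> s)) has_sum conv G \<nu> (conv G \<mu> \<rho>) s) (carrier G)"
    using s by (intro has_sum_conv_mult) (auto simp: prob_on_nonneg[OF \<nu>] prob_on_nonneg[OF \<mu>] prob_on_nonneg[OF \<rho>])
  thus ?thesis unfolding conv_def[of G "conv G \<nu> \<mu>"] by (rule infsumI)
qed

lemma conv_pow_add:
  assumes \<mu>: "prob_on G \<mu>" and s: "s \<in> carrier G"
  shows "conv_pow G \<mu> (n + m) s = conv G (conv_pow G \<mu> n) (conv_pow G \<mu> m) s"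
  using s
proof (induction m arbitrary: s)
  case 0
  thus ?case by (simp add: conv_unit_right)
next
  case (Suc m)
  have "conv_pow G \<mu> (n + Suc m) s = conv G (conv G (conv_pow G \<mu> n) (conv_pow G \<mu> m)) \<mu> s"
    using Suc by (auto intro: conv_cong)
  also have "\<dots> = conv G (conv_pow G \<mu> n) (conv_pow G \<mu> (Suc m)) s"
    using Suc.prems by (simp add: conv_assoc prob_on_conv_pow \<mu>)
  finally show ?case .
qed

end

section \<open>Quasi-subadditive functions\<close>

locale quasi_subadditive = group G for G (structure) +
  fixes K :: real and h :: "'a \<Rightarrow> real"
  assumes nonneg: "s \<in> carrier G \<Longrightarrow> 0 \<le> h s"
    and subadditive: "s \<in> carrier G \<Longrightarrow> t \<in> carrier G \<Longrightarrow> h (s \<otimes> t) \<le> K + h s + h t"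
begin

lemma moment_left_translate:
  assumes \<mu>: "prob_on G \<mu>" and h\<mu>: "has_moment G \<mu> h" and t: "t \<in> carrier G"
  shows "has_moment G \<mu> (\<lambda>u. h (t \<otimes> u))"
    and "moment G \<mu> (\<lambda>u. h (t \<otimes> u)) \<le> K + h t + moment G \<mu> h"
proof -
  have le: "h (t \<otimes> u) \<le> (K + h t) + h u" if "u \<in> carrier G" for u
    using subadditive[OF t that] by simp
  have maj: "has_moment G \<mu> (\<lambda>u. (K + h t) + h u)"
    by (intro has_moment_add has_moment_const \<mu> h\<mu>)
  show translate: "has_moment G \<mu> (\<lambda>u. h (t \<otimes> u))"
    using \<mu> maj by (rule has_moment_abs_le) (use le nonneg t in simp)
  have "moment G \<mu> (\<lambda>u. h (t \<otimes> u)) \<le> moment G \<mu> (\<lambda>u. (K + h t) + h u)"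
    using \<mu> translate maj le by (rule moment_mono)
  also have "\<dots> = K + h t + moment G \<mu> h"
    by (simp add: moment_add has_moment_const \<mu> h\<mu> moment_const)
  finally show "moment G \<mu> (\<lambda>u. h (t \<otimes> u)) \<le> K + h t + moment G \<mu> h" .
qed

lemma moment_conv:
  assumes \<nu>: "prob_on G \<nu>" and \<mu>: "prob_on G \<mu>"
    and h\<nu>: "has_moment G \<nu> h" and h\<mu>: "has_moment G \<mu> h"
  shows "has_moment G (conv G \<nu> \<mu>) h"
    and "moment G (conv G \<nu> \<mu>) h \<le> K + moment G \<nu> h + moment G \<mu> h"
proof -
  define I where "I t = moment G \<mu> (\<lambda>u. h (t \<otimes> u))" for t
  have maj: "has_moment G \<nu> (\<lambda>t. (K + moment G \<mu> h) + h t)"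
    by (intro has_moment_add has_moment_const \<nu> h\<nu>)
  have I_le: "I t \<le> (K + moment G \<mu> h) + h t" if "t \<in> carrier G" for t
    using moment_left_translate(2)[OF \<mu> h\<mu> that] unfolding I_def by simp
  have I_nonneg: "0 \<le> I t" if "t \<in> carrier G" for t
    unfolding I_def using \<mu> by (rule moment_nonneg) (use nonneg that in simp)
  have outer: "has_moment G \<nu> I"
    using \<nu> maj by (rule has_moment_abs_le) (use I_le I_nonneg in force)
  have conv_sum: "((\<lambda>s. conv G \<nu> \<mu> s * h s) has_sum moment G \<nu> I) (carrier G)"
  proof (rule has_sum_conv_mult[where g = I])
    show "((\<lambda>u. \<mu> u * h (t \<otimes> u)) has_sum I t) (carrier G)" if "t \<in> carrier G" for t
      unfolding I_def using moment_left_translate(1)[OF \<mu> h\<mu> that] by (rule has_moment_has_sum)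
    show "((\<lambda>t. \<nu> t * I t) has_sum moment G \<nu> I) (carrier G)"
      using outer by (rule has_moment_has_sum)
  qed (auto simp: nonneg prob_on_nonneg[OF \<nu>] prob_on_nonneg[OF \<mu>])
  thus "has_moment G (conv G \<nu> \<mu>) h"
    unfolding has_moment_def by (rule has_sum_imp_summable)
  have "moment G (conv G \<nu> \<mu>) h = moment G \<nu> I"
    unfolding moment_def[of G "conv G \<nu> \<mu>"] using conv_sum by (rule infsumI)
  also have "\<dots> \<le> moment G \<nu> (\<lambda>t. (K + moment G \<mu> h) + h t)"
    using \<nu> outer maj I_le by (rule moment_mono)
  also have "\<dots> = K + moment G \<nu> h + moment G \<mu> h"
    by (simp add: moment_add has_moment_const \<nu> h\<nu> moment_const)
  finally show "moment G (conv G \<nu> \<mu>) h \<le> K + moment G \<nu> h + moment G \<mu> h" .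
qed

lemma has_moment_conv_pow:
  assumes \<mu>: "prob_on G \<mu>" and h\<mu>: "has_moment G \<mu> h"
  shows "has_moment G (conv_pow G \<mu> n) h"
  by (induction n) (auto intro: has_moment_unit moment_conv(1) prob_on_conv_pow \<mu> h\<mu>)

lemma moment_conv_pow_add_le:
  assumes \<mu>: "prob_on G \<mu>" and h\<mu>: "has_moment G \<mu> h"
  shows "moment G (conv_pow G \<mu> (n + m)) h
    \<le> K + moment G (conv_pow G \<mu> n) h + moment G (conv_pow G \<mu> m) h"
proof -
  have "moment G (conv_pow G \<mu> (n + m)) h = moment G (conv G (conv_pow G \<mu> n) (conv_pow G \<mu> m)) h"
    unfolding moment_def by (intro infsum_cong) (simp add: conv_pow_add \<mu>)
  also have "\<dots> \<le> K + moment G (conv_pow G \<mu> n) h + moment G (conv_pow G \<mu> m) h"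
    by (intro moment_conv(2) prob_on_conv_pow has_moment_conv_pow \<mu> h\<mu>)
  finally show ?thesis .
qed

lemma moment_conv_pow_tendsto:
  assumes \<mu>: "prob_on G \<mu>" and h\<mu>: "has_moment G \<mu> h"
  shows "\<exists>L\<ge>0. (\<lambda>n. moment G (conv_pow G \<mu> n) h / real n) \<longlonglongrightarrow> L"
proof -
  define u where "u n = moment G (conv_pow G \<mu> n) h + K" for n
  have nonneg_moment: "0 \<le> moment G (conv_pow G \<mu> n) h" for n
    by (rule moment_nonneg) (auto intro: nonneg prob_on_conv_pow \<mu>)
  have "(\<lambda>n. u n / real n) \<longlonglongrightarrow> Inf ((\<lambda>n. u n / real n) ` {0<..})" (is "_ \<longlonglongrightarrow> ?L")
  proof (rule subadditive_ratio_tendsto_Inf[where c = K])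
    fix m n :: nat
    show "u (m + n) \<le> u m + u n"
      using moment_conv_pow_add_le[OF \<mu> h\<mu>, of m n] unfolding u_def by linarith
    show "K \<le> u n" using nonneg_moment[of n] unfolding u_def by linarith
  qed
  hence "(\<lambda>n. u n / real n - K / real n) \<longlonglongrightarrow> ?L - 0"
    by (intro tendsto_diff lim_const_over_n)
  hence lim: "(\<lambda>n. moment G (conv_pow G \<mu> n) h / real n) \<longlonglongrightarrow> ?L"
    by (simp add: u_def add_divide_distrib)
  moreover have "0 \<le> ?L"
    using nonneg_moment by (intro tendsto_lowerbound[OF lim] always_eventually) simp_all
  ultimately show ?thesis by blast
qed

end

section \<open>The Lyapunov exponent\<close>

lemma weightE:
  assumes "weight G w"
  obtains a C where "0 < a" "\<And>s. s \<in> carrier G \<Longrightarrow> a \<le> w s"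
    and "0 < C" "\<And>s t. s \<in> carrier G \<Longrightarrow> t \<in> carrier G \<Longrightarrow> w (s \<otimes>\<^bsub>G\<^esub> t) \<le> C * w s * w t"
  using assms that unfolding weight_def by metis

context group
begin

lemma weight_ln_quasi_subadditive:
  assumes "weight G w"
  obtains a K where "quasi_subadditive G K (\<lambda>s. ln (w s) - ln a)"
proof -
  obtain a C where a: "0 < a" "\<And>s. s \<in> carrier G \<Longrightarrow> a \<le> w s"
    and C: "0 < C" "\<And>s t. s \<in> carrier G \<Longrightarrow> t \<in> carrier G \<Longrightarrow> w (s \<otimes> t) \<le> C * w s * w t"
    using assms by (rule weightE) blast
  have pos: "0 < w s" if "s \<in> carrier G" for s using a that by (meson less_le_trans)
  have "quasi_subadditive G (ln C + ln a) (\<lambda>s. ln (w s) - ln a)"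
  proof
    fix s t assume s: "s \<in> carrier G" and t: "t \<in> carrier G"
    show "0 \<le> ln (w s) - ln a" using a pos[OF s] s by simp
    have "ln (w (s \<otimes> t)) \<le> ln (C * w s * w t)"
      using C(2)[OF s t] pos s t by (intro ln_mono) auto
    also have "\<dots> = ln C + ln (w s) + ln (w t)"
      using C(1) pos[OF s] pos[OF t] by (simp add: ln_mult)
    finally show "ln (w (s \<otimes> t)) - ln a \<le> ln C + ln a + (ln (w s) - ln a) + (ln (w t) - ln a)"
      by simp
  qed
  thus ?thesis by (rule that)
qed

lemma has_moment_conv_pow_ln_weight:
  assumes w: "weight G w" and \<mu>: "prob_on G \<mu>" and log_moment: "finite_log_moment G w \<mu>"
  shows "has_moment G (conv_pow G \<mu> n) (\<lambda>s. ln (w s))"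
proof -
  obtain a K where "quasi_subadditive G K (\<lambda>s. ln (w s) - ln a)"
    using w by (rule weight_ln_quasi_subadditive)
  then interpret quasi_subadditive G K "\<lambda>s. ln (w s) - ln a" .
  have "has_moment G \<mu> (\<lambda>s. ln (w s) - ln a)"
    using log_moment unfolding finite_log_moment_def has_moment_def[symmetric]
    by (simp add: has_moment_diff_const_iff \<mu>)
  hence "has_moment G (conv_pow G \<mu> n) (\<lambda>s. ln (w s) - ln a)"
    by (rule has_moment_conv_pow[OF \<mu>])
  thus ?thesis by (simp add: has_moment_diff_const_iff prob_on_conv_pow \<mu>)
qed

lemma lyap_seq_tendsto:
  assumes w: "weight G w" and \<mu>: "prob_on G \<mu>" and log_moment: "finite_log_moment G w \<mu>"
  shows "\<exists>L\<ge>0. lyap_seq G w \<mu> \<longlonglongrightarrow> L"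
proof -
  obtain a K where "quasi_subadditive G K (\<lambda>s. ln (w s) - ln a)"
    using w by (rule weight_ln_quasi_subadditive)
  then interpret quasi_subadditive G K "\<lambda>s. ln (w s) - ln a" .
  have "has_moment G \<mu> (\<lambda>s. ln (w s) - ln a)"
    using log_moment unfolding finite_log_moment_def has_moment_def[symmetric]
    by (simp add: has_moment_diff_const_iff \<mu>)
  then obtain L where "L \<ge> 0"
    and L: "(\<lambda>n. moment G (conv_pow G \<mu> n) (\<lambda>s. ln (w s) - ln a) / real n) \<longlonglongrightarrow> L"
    using moment_conv_pow_tendsto[OF \<mu>] by blast
  have "lyap_seq G w \<mu> n = moment G (conv_pow G \<mu> n) (\<lambda>s. ln (w s) - ln a) / real n + ln a / real n"
    for n
    using moment_diff_const[OF prob_on_conv_pow[OF \<mu>] has_moment_conv_pow_ln_weight[OF w \<mu> log_moment]]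
    unfolding lyap_seq_eq_moment by (simp add: diff_divide_distrib)
  hence "lyap_seq G w \<mu> = (\<lambda>n. moment G (conv_pow G \<mu> n) (\<lambda>s. ln (w s) - ln a) / real n + ln a / real n)" ..
  moreover have "(\<lambda>n. moment G (conv_pow G \<mu> n) (\<lambda>s. ln (w s) - ln a) / real n + ln a / real n) \<longlonglongrightarrow> L + 0"
    by (intro tendsto_add L lim_const_over_n)
  ultimately show ?thesis using \<open>L \<ge> 0\<close> by auto
qed

lemma weight_equiv_ln_bounded:
  assumes w: "weight G w" and equiv: "weight_equiv G w w'"
  shows "\<exists>D. \<forall>s\<in>carrier G. \<bar>ln (w' s) - ln (w s)\<bar> \<le> D"
proof -
  obtain a C where a: "0 < a" "\<And>s. s \<in> carrier G \<Longrightarrow> a \<le> w s"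
    using w by (rule weightE) blast
  obtain c c' where c: "0 < c" "0 < c'"
    and bounds: "\<And>s. s \<in> carrier G \<Longrightarrow> c * w s \<le> w' s \<and> w' s \<le> c' * w s"
    using equiv unfolding weight_equiv_def by blast
  have "\<bar>ln (w' s) - ln (w s)\<bar> \<le> \<bar>ln c\<bar> + \<bar>ln c'\<bar>" if s: "s \<in> carrier G" for s
  proof -
    have "0 < w s" using a(1) a(2)[OF s] by linarith
    hence pos: "0 < w s" "0 < c * w s" using c by auto
    have "ln c + ln (w s) \<le> ln (w' s)"
      using ln_mono[OF conjunct1[OF bounds[OF s]] pos(2)] pos c by (simp add: ln_mult)
    moreover have "ln (w' s) \<le> ln c' + ln (w s)"
      using ln_mono[OF conjunct2[OF bounds[OF s]]] bounds[OF s] pos c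
      by (simp add: ln_mult)
    ultimately show ?thesis by linarith
  qed
  thus ?thesis by blast
qed

lemma lyap_seq_weight_equiv:
  assumes w: "weight G w" and \<mu>: "prob_on G \<mu>" and log_moment: "finite_log_moment G w \<mu>"
    and equiv: "weight_equiv G w w'" and lim: "lyap_seq G w \<mu> \<longlonglongrightarrow> L"
  shows "lyap_seq G w' \<mu> \<longlonglongrightarrow> L"
proof -
  obtain D where D: "\<And>s. s \<in> carrier G \<Longrightarrow> \<bar>ln (w' s) - ln (w s)\<bar> \<le> D"
    using weight_equiv_ln_bounded[OF w equiv] by blast
  define e where "e n = moment G (conv_pow G \<mu> n) (\<lambda>s. ln (w' s) - ln (w s))" for n
  have bounded: "has_moment G (conv_pow G \<mu> n) (\<lambda>s. ln (w' s) - ln (w s))" "\<bar>e n\<bar> \<le> D" for n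
    unfolding e_def using bounded_moment[OF prob_on_conv_pow[OF \<mu>] D] by auto
  have "lyap_seq G w' \<mu> n = lyap_seq G w \<mu> n + e n / real n" for n
  proof -
    have "moment G (conv_pow G \<mu> n) (\<lambda>s. ln (w s) + (ln (w' s) - ln (w s)))
        = moment G (conv_pow G \<mu> n) (\<lambda>s. ln (w s)) + e n"
      unfolding e_def
      by (rule moment_add[OF has_moment_conv_pow_ln_weight[OF w \<mu> log_moment] bounded(1)])
    thus ?thesis unfolding lyap_seq_eq_moment by (simp add: add_divide_distrib)
  qed
  hence "lyap_seq G w' \<mu> = (\<lambda>n. lyap_seq G w \<mu> n + e n / real n)" ..
  moreover have "(\<lambda>n. e n / real n) \<longlonglongrightarrow> 0"
  proof (rule Lim_null_comparison)
    show "\<forall>\<^sub>F n in sequentially. norm (e n / real n) \<le> D / real n"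
      using bounded(2) by (intro always_eventually allI) (simp add: divide_right_mono)
  qed (rule lim_const_over_n)
  ultimately show ?thesis using tendsto_add[OF lim] by fastforce
qed

section \<open>Word length and growth rate\<close>

lemma words_subset_carrier: "S \<subseteq> carrier G \<Longrightarrow> words G S n \<subseteq> carrier G"
  by (induction n) auto

lemma one_in_words:
  assumes "\<one> \<in> S" "S \<subseteq> carrier G"
  shows "\<one> \<in> words G S n"
proof (induction n)
  case (Suc n)
  have "\<exists>x y. \<one> = x \<otimes> y \<and> x \<in> words G S n \<and> y \<in> S"
    using Suc.IH assms by (intro exI[of _ \<one>]) simp
  thus ?case by simp
qed simp

lemma finite_words: "finite S \<Longrightarrow> finite (words G S n)"
  by (induction n) (auto simp: finite_image_set2)

lemma words_mult:
  assumes S: "S \<subseteq> carrier G" and x: "x \<in> words G S n"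
  shows "y \<in> words G S m \<Longrightarrow> x \<otimes> y \<in> words G S (n + m)"
proof (induction m arbitrary: y)
  case 0
  have "x \<in> carrier G" using words_subset_carrier[OF S] x by auto
  thus ?case using 0 x by simp
next
  case (Suc m)
  then obtain y' z where y: "y = y' \<otimes> z" "y' \<in> words G S m" "z \<in> S" by auto
  have "x \<in> carrier G" "y' \<in> carrier G" "z \<in> carrier G"
    using words_subset_carrier[OF S] x y S by auto
  hence "x \<otimes> y = (x \<otimes> y') \<otimes> z" using y by (simp add: m_assoc)
  moreover have "x \<otimes> y' \<in> words G S (n + m)" using Suc.IH y by simp
  ultimately show ?case using y by auto
qed

lemma words_add_split:
  assumes S: "S \<subseteq> carrier G"
  shows "z \<in> words G S (n + m) \<Longrightarrow> \<exists>x\<in>words G S n. \<exists>y\<in>words G S m. z = x \<otimes> y"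
proof (induction m arbitrary: z)
  case 0
  have "z \<in> carrier G" using words_subset_carrier[OF S] 0 by auto
  hence "z = z \<otimes> \<one>" by simp
  thus ?case using 0 by auto
next
  case (Suc m)
  then obtain z' t where z: "z = z' \<otimes> t" "z' \<in> words G S (n + m)" "t \<in> S" by auto
  then obtain x y where xy: "x \<in> words G S n" "y \<in> words G S m" "z' = x \<otimes> y"
    using Suc.IH by blast
  have "x \<in> carrier G" "y \<in> carrier G" "t \<in> carrier G"
    using words_subset_carrier[OF S] xy z S by auto
  hence "z = x \<otimes> (y \<otimes> t)" using z xy by (simp add: m_assoc)
  moreover have "y \<otimes> t \<in> words G S (Suc m)" using xy z by auto
  ultimately show ?case using xy by blast
qed

lemma in_words_word_length:
  assumes S: "S \<subseteq> carrier G" and inv_closed: "\<forall>s\<in>S. inv s \<in> S"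
    and gen: "generate G S = carrier G" and s: "s \<in> carrier G"
  shows "s \<in> words G S (word_length G S s)"
proof -
  have single: "x \<in> words G S 1" if "x \<in> S" for x
  proof -
    have "x = \<one> \<otimes> x" using that S by auto
    thus ?thesis using that by auto
  qed
  have "\<exists>n. x \<in> words G S n" if "x \<in> generate G S" for x
    using that
  proof (induction rule: generate.induct)
    case one thus ?case by (intro exI[of _ 0]) simp
  next
    case (incl h) thus ?case using single by blast
  next
    case (inv h) thus ?case using single inv_closed by blast
  next
    case (eng h1 h2) thus ?case using words_mult[OF S] by blast
  qed
  with gen s have "\<exists>n. s \<in> words G S n" by blast
  thus ?thesis unfolding word_length_def by (rule LeastI_ex)
qed

lemma word_length_le: "s \<in> words G S n \<Longrightarrow> word_length G S s \<le> n"
  unfolding word_length_def by (rule Least_le)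

lemma quasi_subadditive_word_length:
  assumes "S \<subseteq> carrier G" "\<forall>s\<in>S. inv s \<in> S" "generate G S = carrier G"
  shows "quasi_subadditive G 0 (\<lambda>s. real (word_length G S s))"
proof unfold_locales
  fix s t assume "s \<in> carrier G" "t \<in> carrier G"
  hence "s \<otimes> t \<in> words G S (word_length G S s + word_length G S t)"
    using assms by (intro words_mult in_words_word_length)
  thus "real (word_length G S (s \<otimes> t)) \<le> 0 + real (word_length G S s) + real (word_length G S t)"
    using word_length_le by fastforce
qed simp

lemma le_Sup_words:
  fixes w :: "'a \<Rightarrow> real"
  assumes "finite S" "s \<in> words G S n"
  shows "w s \<le> (SUP s\<in>words G S n. w s)"
  by (intro cSUP_upper bdd_above_finite finite_imageI finite_words assms)

lemma Sup_words_add_le: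
  fixes w :: "'a \<Rightarrow> real"
  assumes S: "finite S" "S \<subseteq> carrier G" "\<one> \<in> S"
    and w: "\<And>s. s \<in> carrier G \<Longrightarrow> 0 \<le> w s" "0 \<le> C"
    and submult: "\<And>s t. s \<in> carrier G \<Longrightarrow> t \<in> carrier G \<Longrightarrow> w (s \<otimes> t) \<le> C * w s * w t"
  shows "(SUP s\<in>words G S (n + m). w s) \<le> C * (SUP s\<in>words G S n. w s) * (SUP s\<in>words G S m. w s)"
proof (rule cSUP_least)
  show "words G S (n + m) \<noteq> {}" using one_in_words[OF S(3,2)] by blast
  fix z assume "z \<in> words G S (n + m)"
  then obtain x y where xy: "x \<in> words G S n" "y \<in> words G S m" "z = x \<otimes> y"
    using words_add_split[OF S(2)] by blast
  have carrier: "x \<in> carrier G" "y \<in> carrier G" using xy words_subset_carrier[OF S(2)] by auto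
  have "w z \<le> C * w x * w y" using submult[OF carrier] xy by simp
  also have "\<dots> \<le> C * (SUP s\<in>words G S n. w s) * (SUP s\<in>words G S m. w s)"
  proof -
    have "w x \<le> (SUP s\<in>words G S n. w s)" "w y \<le> (SUP s\<in>words G S m. w s)"
      using le_Sup_words S(1) xy(1,2) by blast+
    moreover have "0 \<le> w x" "0 \<le> w y" using w(1) carrier by blast+
    ultimately show ?thesis
      using w(2) by (intro mult_mono mult_left_mono mult_nonneg_nonneg) simp_all
  qed
  finally show "w z \<le> C * (SUP s\<in>words G S n. w s) * (SUP s\<in>words G S m. w s)" .
qed

lemma ln_Sup_words_ratio_tendsto:
  assumes w: "weight G w" and S: "finite S" "S \<subseteq> carrier G" "\<one> \<in> S"
  shows "(\<lambda>n. ln (SUP s\<in>words G S n. w s) / real n) \<longlonglongrightarrow> ln (growth_rate G w S)"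
proof -
  obtain a C where a: "0 < a" "\<And>s. s \<in> carrier G \<Longrightarrow> a \<le> w s"
    and C: "0 < C" "\<And>s t. s \<in> carrier G \<Longrightarrow> t \<in> carrier G \<Longrightarrow> w (s \<otimes> t) \<le> C * w s * w t"
    using w by (rule weightE) blast
  define M where "M n = (SUP s\<in>words G S n. w s)" for n
  have "a \<le> M n" for n
    using a(2)[OF one_closed] le_Sup_words[OF S(1) one_in_words[OF S(3,2), of n], of w]
    unfolding M_def by linarith
  moreover have "M (m + n) \<le> C * M m * M n" for m n
    unfolding M_def
  proof (intro Sup_words_add_le S C(2))
    show "0 \<le> w s" if "s \<in> carrier G" for s using a(1) a(2)[OF that] by linarith
  qed (use C(1) in simp)
  ultimately obtain L where lim: "(\<lambda>n. ln (M n) / real n) \<longlonglongrightarrow> L"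
    and root: "(\<lambda>n. M n powr (1 / real n)) \<longlonglongrightarrow> exp L"
    using submultiplicative_ln_ratio_tendsto[OF a(1) _ C(1)] by blast
  from root have "growth_rate G w S = exp L" unfolding growth_rate_def M_def by (rule limI)
  thus ?thesis using lim unfolding M_def by simp
qed

lemma ln_weight_le_word_length:
  assumes w: "weight G w" and S: "finite S" "S \<subseteq> carrier G" "\<one> \<in> S" "\<forall>s\<in>S. inv s \<in> S"
    "generate G S = carrier G"
    and "0 < \<epsilon>"
  shows "\<exists>B. \<forall>s\<in>carrier G. ln (w s) \<le> (ln (growth_rate G w S) + \<epsilon>) * real (word_length G S s) + B"
proof -
  obtain B where B: "\<And>n. ln (SUP s\<in>words G S n. w s) \<le> (ln (growth_rate G w S) + \<epsilon>) * real n + B"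
    using ratio_tendsto_imp_linear_bound[OF ln_Sup_words_ratio_tendsto[OF w S(1-3)] \<open>0 < \<epsilon>\<close>] by blast
  obtain a C where a: "0 < a" "\<And>s. s \<in> carrier G \<Longrightarrow> a \<le> w s"
    using w by (rule weightE) blast
  have "ln (w s) \<le> (ln (growth_rate G w S) + \<epsilon>) * real (word_length G S s) + B" if s: "s \<in> carrier G" for s
  proof -
    have "w s \<le> (SUP s\<in>words G S (word_length G S s). w s)"
      using S s by (intro le_Sup_words in_words_word_length)
    hence "ln (w s) \<le> ln (SUP s\<in>words G S (word_length G S s). w s)"
      using a(1) a(2)[OF s] by (intro ln_mono) auto
    thus ?thesis using B by (rule order.trans)
  qed
  thus ?thesis by blast
qed

lemma speed_seq_tendsto:
  assumes S: "S \<subseteq> carrier G" "\<forall>s\<in>S. inv s \<in> S" "generate G S = carrier G"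
    and \<mu>: "prob_on G \<mu>" and first_moment: "finite_first_moment G S \<mu>"
  shows "\<exists>l\<ge>0. speed_seq G S \<mu> \<longlonglongrightarrow> l"
proof -
  interpret quasi_subadditive G 0 "\<lambda>s. real (word_length G S s)"
    using S by (rule quasi_subadditive_word_length)
  show ?thesis
    using moment_conv_pow_tendsto[OF \<mu>] first_moment
    unfolding speed_seq_eq_moment[abs_def] finite_first_moment_def has_moment_def .
qed

lemma lyapunov_limit_le_growth_speed:
  assumes w: "weight G w" and \<mu>: "prob_on G \<mu>" and log_moment: "finite_log_moment G w \<mu>"
    and S: "finite S" "S \<subseteq> carrier G" "\<one> \<in> S" "\<forall>s\<in>S. inv s \<in> S" "generate G S = carrier G"
    and first_moment: "finite_first_moment G S \<mu>"
    and L: "lyap_seq G w \<mu> \<longlonglongrightarrow> L" and l: "speed_seq G S \<mu> \<longlonglongrightarrow> l"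
  shows "L \<le> ln (growth_rate G w S) * l"
proof -
  interpret quasi_subadditive G 0 "\<lambda>s. real (word_length G S s)"
    using S(2,4,5) by (rule quasi_subadditive_word_length)
  let ?g = "ln (growth_rate G w S)"
  have bound: "L \<le> (?g + \<epsilon>) * l" if "0 < \<epsilon>" for \<epsilon>
  proof -
    obtain B where B: "\<And>s. s \<in> carrier G \<Longrightarrow> ln (w s) \<le> (?g + \<epsilon>) * real (word_length G S s) + B"
      using ln_weight_le_word_length[OF w S \<open>0 < \<epsilon>\<close>] by blast
    have "lyap_seq G w \<mu> n \<le> (?g + \<epsilon>) * speed_seq G S \<mu> n + B / real n" for n
    proof -
      have "moment G (conv_pow G \<mu> n) (\<lambda>s. ln (w s))
          \<le> (?g + \<epsilon>) * moment G (conv_pow G \<mu> n) (\<lambda>s. real (word_length G S s)) + B"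
        using first_moment B unfolding finite_first_moment_def has_moment_def[symmetric]
        by (intro moment_le_affine prob_on_conv_pow has_moment_conv_pow has_moment_conv_pow_ln_weight
            w \<mu> log_moment)
      thus ?thesis
        unfolding lyap_seq_eq_moment speed_seq_eq_moment
        by (simp add: divide_right_mono add_divide_distrib[symmetric])
    qed
    moreover have "(\<lambda>n. (?g + \<epsilon>) * speed_seq G S \<mu> n + B / real n) \<longlonglongrightarrow> (?g + \<epsilon>) * l + 0"
      by (intro tendsto_intros l lim_const_over_n)
    ultimately show ?thesis using L by (simp add: LIMSEQ_le)
  qed
  have "\<forall>\<^sub>F \<epsilon> in at_right 0. L \<le> (?g + \<epsilon>) * l"
    using eventually_at_right_less[of "0 :: real"] by (rule eventually_mono) (rule bound)
  moreover have "((\<lambda>\<epsilon>. (?g + \<epsilon>) * l) \<longlongrightarrow> (?g + 0) * l) (at_right 0)"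
    by (intro tendsto_intros)
  ultimately show ?thesis by (simp add: tendsto_lowerbound)
qed

end

theorem proposition3p3:
  fixes G :: "('a, 'b) monoid_scheme" and w :: "'a \<Rightarrow> real" and \<mu> :: "'a \<Rightarrow> real"
  assumes "group G" and "countable (carrier G)"
    and "weight G w"
    and "prob_on G \<mu>"
    and "finite_log_moment G w \<mu>"
  shows "(convergent (lyap_seq G w \<mu>) \<and> lyapunov G w \<mu> \<ge> 0)
    \<and> (\<forall>w'. weight G w' \<and> weight_equiv G w w' \<longrightarrow> lyapunov G w' \<mu> = lyapunov G w \<mu>)
    \<and> (\<forall>S. finite S \<and> S \<subseteq> carrier G \<and> \<one>\<^bsub>G\<^esub> \<in> S \<and> (\<forall>s\<in>S. inv\<^bsub>G\<^esub> s \<in> S)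
          \<and> generate G S = carrier G \<and> finite_first_moment G S \<mu>
          \<longrightarrow> convergent (lyap_seq G w \<mu>)
              \<and> lyapunov G w \<mu> \<le> ln (growth_rate G w S) * speed G S \<mu>)"
proof -
  interpret group G by fact
  obtain L where "L \<ge> 0" and L: "lyap_seq G w \<mu> \<longlonglongrightarrow> L"
    using lyap_seq_tendsto[OF assms(3-5)] by blast
  have conv: "convergent (lyap_seq G w \<mu>)" using L by (rule convergentI)
  have ly: "lyapunov G w \<mu> = L" unfolding lyapunov_def using L by (rule limI)
  have "lyapunov G w' \<mu> = L" if "weight_equiv G w w'" for w'
    unfolding lyapunov_def using lyap_seq_weight_equiv[OF assms(3-5) that L] by (rule limI)
  moreover have "L \<le> ln (growth_rate G w S) * speed G S \<mu>"
    if S: "finite S" "S \<subseteq> carrier G" "\<one>\<^bsub>G\<^esub> \<in> S" "\<forall>s\<in>S. inv\<^bsub>G\<^esub> s \<in> S"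
      "generate G S = carrier G" "finite_first_moment G S \<mu>" for S
  proof -
    obtain l where "speed_seq G S \<mu> \<longlonglongrightarrow> l"
      using speed_seq_tendsto[OF S(2,4,5) assms(4) S(6)] by blast
    moreover have "speed G S \<mu> = l" unfolding speed_def using calculation by (rule limI)
    ultimately show ?thesis using lyapunov_limit_le_growth_speed[OF assms(3-5) S L] by simp
  qed
  ultimately show ?thesis using conv ly \<open>L \<ge> 0\<close> by auto
qed

end
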